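(* Let $\mathcal H=\{h_1,\dots,h_k\}$ be an admissible set of $k\ge2$ distinct integers with $|h_i|\le h$ for all $i$. Then \[ 1\ll\beta(\mathcal H)\ll \log\log 10h, \] and there is a constant $b_k$ depending only on $k$ such that \[ \mathfrak S(\mathcal H)\ll(\log\log 10h)^{b_k}. \] The implied constants depend only on $k$.
   Context: For a prime $p$, $\nu_p$ is the number of distinct residue classes mod $p$ containing an element of $\mathcal H$. The set $\mathcal H$ is admissible if $\nu_p<p$ for all primes $p$. Define \[ \beta(\mathcal H)=\sum_p\frac{(k-\nu_p)\log p}{p},\qquad \mathfrak S(\mathcal H)=\prod_p\Big(1-\frac{\nu_p}{p}\Big)\Big(1-\frac1p\Big)^{-k}. \] *)

theory Defs
  imports "HOL-Analysis.Analysis" "HOL-Computational_Algebra.Primes"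
begin

definition nu :: "nat \<Rightarrow> int set \<Rightarrow> nat" where
  "nu p H = card ((\<lambda>x. x mod int p) ` H)"

definition admissible :: "int set \<Rightarrow> bool" where
  "admissible H \<longleftrightarrow> (\<forall>p. prime p \<longrightarrow> nu p H < p)"

text \<open>beta(H) = sum over primes p of (k - nu_p) log p / p, with k = card H.
  Only finitely many terms are nonzero for finite H.\<close>
definition beta :: "int set \<Rightarrow> real" where
  "beta H = (\<Sum>\<^sub>\<infinity>p\<in>{p::nat. prime p}.
      (real (card H) - real (nu p H)) * ln (real p) / real p)"

definition sing_series :: "int set \<Rightarrow> real" where
  "sing_series H = (\<Prod>n. if prime n
      then (1 - real (nu n H) / real n) * (1 - 1 / real n) powi (- int (card H))
      else 1)"

end

theory Submission
  imports Defs
begin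

(* A prime p with nu_p(H) < k is exceptional: two elements of H are congruent mod p, so p divides
   D = prod_{a <> b} |a - b| <= (2h)^(k^2).  Only exceptional primes contribute to beta(H), every
   other Euler factor of the singular series is at most 1 (Bernoulli's inequality), and an
   exceptional factor is at most exp(2k/p).  Hence beta(H) <= k sum_P log p / p and
   S(H) <= exp(2k sum_P 1/p) for a set P of primes with log prod P <= y = k^2 log 10h.  Such sums
   exceed the corresponding sums over the primes up to y by O(1), so Chebyshev's bound
   sum_{p <= y} log p / p <= 2 log y and the Mertens-type bound sum_{p <= y} 1/p <= 8 + 6 log log y
   give beta(H) << log log 10h and S(H) << (log log 10h)^(12k).  The lower bound comes from p = 2,
   where nu_2 <= 1 < k. *)

section \<open>Sums over primes\<close>

lemma prod_primes_dvd:
  fixes n :: nat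
  assumes "n \<noteq> 0" and "\<And>p. p \<in> P \<Longrightarrow> prime p \<and> p dvd n"
  shows "\<Prod>P dvd n"
proof -
  have "P \<subseteq> prime_factors n"
    using assms by (auto intro: prime_factorsI)
  then have "\<Prod>P dvd \<Prod>(prime_factors n)"
    by (intro prod_dvd_prod_subset) auto
  also have "\<dots> dvd (\<Prod>p\<in>prime_factors n. p ^ multiplicity p n)"
    by (intro prod_dvd_prod) (auto simp: prime_factors_multiplicity)
  also have "\<dots> = n"
    using assms(1) by (simp add: prod_prime_factors)
  finally show ?thesis .
qed

lemma sum_ln_prime_factors_le:
  assumes "n \<noteq> 0"
  shows "(\<Sum>p\<in>prime_factors n. ln (real p)) \<le> ln (real n)"
proof -
  have "\<Prod>(prime_factors n) \<le> n"
    using assms by (intro dvd_imp_le prod_primes_dvd) auto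
  then have "(\<Prod>p\<in>prime_factors n. real p) \<le> real n"
    unfolding of_nat_prod[symmetric] of_nat_le_iff .
  moreover have "0 < (\<Prod>p\<in>prime_factors n. real p)"
    by (simp add: prime_factors_gt_0_nat prod_pos)
  ultimately show ?thesis
    by (subst ln_prod[symmetric]) (auto dest: prime_factors_gt_0_nat)
qed

lemma card_multiples_ge:
  assumes "1 \<le> p" "p \<le> n"
  shows "real n / (2 * real p) \<le> real (card {m\<in>{1..n}. p dvd m})"
proof -
  have "(*) p ` {1..n div p} \<subseteq> {m\<in>{1..n}. p dvd m}"
    using assms by (auto simp: less_eq_div_iff_mult_less_eq mult.commute)
  moreover have "inj_on ((*) p) {1..n div p}"
    using assms by (auto simp: inj_on_def)
  ultimately have card: "n div p \<le> card {m\<in>{1..n}. p dvd m}"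
    using card_inj_on_le[of "(*) p" "{1..n div p}"] by auto
  have "n = p * (n div p) + n mod p" "n mod p < p"
    using assms by simp_all
  then have "n < p * (n div p + 1)"
    unfolding distrib_left by linarith
  then have "real n < real p * (real (n div p) + 1)"
    by (metis of_nat_1 of_nat_add of_nat_less_iff of_nat_mult)
  also have "\<dots> \<le> real p * (2 * real (n div p))"
    using assms by (intro mult_left_mono) (auto simp: div_greater_zero_iff Suc_le_eq)
  also have "\<dots> \<le> real p * (2 * real (card {m\<in>{1..n}. p dvd m}))"
    using card by (intro mult_left_mono) auto
  finally show ?thesis
    using assms by (simp add: field_simps)
qed

(* Count the pairs (p, m) with p prime, p dvd m and m <= n: each p <= n divides at least n / (2p)
   of the m, while the primes dividing m contribute at most ln m. *)
lemma sum_ln_prime_div_prime_le: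
  assumes "1 \<le> n"
  shows "(\<Sum>p | prime p \<and> p \<le> n. ln (real p) / real p) \<le> 2 * ln (real n)"
proof -
  let ?Pr = "{p. prime p \<and> p \<le> n}"
  have "real n / 2 * (\<Sum>p\<in>?Pr. ln (real p) / real p)
      \<le> (\<Sum>p\<in>?Pr. real (card {m\<in>{1..n}. p dvd m}) * ln (real p))"
    unfolding sum_distrib_left
  proof (intro sum_mono)
    fix p assume p: "p \<in> ?Pr"
    then have "real n / (2 * real p) * ln (real p) \<le> real (card {m\<in>{1..n}. p dvd m}) * ln (real p)"
      by (intro mult_right_mono card_multiples_ge) (auto simp: prime_gt_0_nat Suc_le_eq)
    then show "real n / 2 * (ln (real p) / real p) \<le> real (card {m\<in>{1..n}. p dvd m}) * ln (real p)"
      by simp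
  qed
  also have "\<dots> = (\<Sum>m\<in>{1..n}. \<Sum>p | p \<in> ?Pr \<and> p dvd m. ln (real p))"
    using sum.swap_restrict[of ?Pr "{1..n}" "\<lambda>p m. ln (real p)" "\<lambda>p m. p dvd m"] by simp
  also have "\<dots> = (\<Sum>m\<in>{1..n}. \<Sum>p\<in>prime_factors m. ln (real p))"
    by (intro sum.cong refl arg_cong[where f = "sum _"])
      (auto simp: in_prime_factors_iff intro: order.trans[OF dvd_imp_le])
  also have "\<dots> \<le> (\<Sum>m\<in>{1..n}. ln (real n))"
    by (intro sum_mono order.trans[OF sum_ln_prime_factors_le]) auto
  finally show ?thesis
    using assms by (simp add: field_simps)
qed

lemma sum_inverse_primes_square_le:
  assumes "2 \<le> N"
  shows "(\<Sum>p | prime p \<and> p \<le> N\<^sup>2. 1 / real p) \<le> (\<Sum>p | prime p \<and> p \<le> N. 1 / real p) + 4"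
proof -
  have lnN: "0 < ln (real N)"
    using assms by simp
  have "N \<le> N\<^sup>2"
    using le_square[of N] by (simp add: power2_eq_square)
  then have "{p. prime p \<and> p \<le> N\<^sup>2} = {p. prime p \<and> p \<le> N} \<union> {p. prime p \<and> N < p \<and> p \<le> N\<^sup>2}"
    by auto
  then have split: "(\<Sum>p | prime p \<and> p \<le> N\<^sup>2. 1 / real p)
      = (\<Sum>p | prime p \<and> p \<le> N. 1 / real p) + (\<Sum>p | prime p \<and> N < p \<and> p \<le> N\<^sup>2. 1 / real p)"
    by (simp add: sum.union_disjoint disjoint_iff)
  have "(\<Sum>p | prime p \<and> N < p \<and> p \<le> N\<^sup>2. 1 / real p)
      \<le> (\<Sum>p | prime p \<and> N < p \<and> p \<le> N\<^sup>2. ln (real p) / real p / ln (real N))"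
    using assms lnN by (intro sum_mono) (auto simp: field_simps)
  also have "\<dots> \<le> (\<Sum>p | prime p \<and> p \<le> N\<^sup>2. ln (real p) / real p) / ln (real N)"
    unfolding sum_divide_distrib using lnN
    by (intro sum_mono2) (auto intro!: divide_nonneg_nonneg ln_ge_zero dest: prime_ge_1_nat)
  also have "\<dots> \<le> 2 * ln (real (N\<^sup>2)) / ln (real N)"
    using assms lnN by (intro divide_right_mono sum_ln_prime_div_prime_le) auto
  also have "\<dots> = 4"
    using lnN by (simp add: ln_realpow)
  finally show ?thesis
    using split by linarith
qed

lemma sum_inverse_primes_le_double_exp:
  "(\<Sum>p | prime p \<and> p \<le> 2 ^ 2 ^ J. 1 / real p) \<le> 1 / 2 + 4 * real J"
proof (induction J)
  case 0
  have "{p. prime p \<and> p \<le> (2::nat)} = {2}"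
    by (auto dest: prime_ge_2_nat)
  then show ?case
    by simp
next
  case (Suc J)
  have "(2::nat) \<le> 2 ^ 2 ^ J"
    using power_increasing[of 1 "2 ^ J" "2::nat"] by simp
  moreover have "(2::nat) ^ 2 ^ Suc J = (2 ^ 2 ^ J)\<^sup>2"
    by (simp flip: power_mult)
  ultimately show ?case
    using Suc.IH sum_inverse_primes_square_le[of "2 ^ 2 ^ J"] by simp
qed

lemma ln_ln_2_ge: "- 1 / 2 \<le> ln (ln (2::real))"
proof -
  have "ln (3 / 2 :: real) \<le> 1 / 2"
    using ln_le_minus_one[of "3 / 2 :: real"] by simp
  then have "- 1 / 2 \<le> ln (2 / 3 :: real)"
    using ln_div[of 2 3] ln_div[of 3 2] by simp
  also have "\<dots> \<le> ln (ln 2)"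
    using ln2_ge_two_thirds by simp
  finally show ?thesis .
qed

lemma sum_inverse_primes_le:
  assumes "3 \<le> n"
  shows "(\<Sum>p | prime p \<and> p \<le> n. 1 / real p) \<le> 8 + 6 * ln (ln (real n))"
proof -
  have "n \<le> 2 ^ 2 ^ n"
    using less_exp[of n] less_exp[of "2 ^ n"] by linarith
  then obtain J where J: "n \<le> 2 ^ 2 ^ J" "\<And>j. j < J \<Longrightarrow> \<not> n \<le> 2 ^ 2 ^ j"
    using exists_least_iff[of "\<lambda>J. n \<le> 2 ^ 2 ^ J"] by blast
  have "J \<noteq> 0"
    using J(1) assms by (intro notI) simp
  then have "2 ^ 2 ^ (J - 1) < n"
    using J(2)[of "J - 1"] by simp
  then have "real (2 ^ 2 ^ (J - 1)) < real n"
    by (simp only: of_nat_less_iff)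
  then have "ln (2 ^ 2 ^ (J - 1)) < ln (real n)"
    by simp
  then have "ln (2 ^ (J - 1) * ln 2) < ln (ln (real n))"
    using assms by (subst ln_less_cancel_iff) (simp_all add: ln_realpow)
  then have "real (J - 1) * ln 2 + ln (ln 2) < ln (ln (real n))"
    by (simp add: ln_mult ln_realpow)
  moreover have "real (J - 1) * (2 / 3) \<le> real (J - 1) * ln 2"
    using ln2_ge_two_thirds by (intro mult_left_mono) auto
  ultimately have "4 * real J \<le> 7 + 6 * ln (ln (real n))"
    using ln_ln_2_ge \<open>J \<noteq> 0\<close> by (simp add: of_nat_diff)
  moreover have "(\<Sum>p | prime p \<and> p \<le> n. 1 / real p) \<le> (\<Sum>p | prime p \<and> p \<le> 2 ^ 2 ^ J. 1 / real p)"
    using J(1) by (intro sum_mono2) auto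
  ultimately show ?thesis
    using sum_inverse_primes_le_double_exp[of J] by linarith
qed

lemma real_le_iff_le_nat_floor: "0 < p \<Longrightarrow> real p \<le> x \<longleftrightarrow> p \<le> nat \<lfloor>x\<rfloor>"
  by (cases "0 \<le> x") (auto simp: le_nat_iff le_floor_iff)

lemma sum_split_le_gt:
  fixes g :: "'a \<Rightarrow> 'b::linorder"
  assumes "finite A"
  shows "sum f A = sum f {x\<in>A. g x \<le> y} + sum f {x\<in>A. y < g x}"
  using sum.Int_Diff[OF assms, of f "{x. g x \<le> y}"] by (simp add: Int_def set_diff_eq not_le)

lemma sum_ln_prime_div_prime_gt_le:
  assumes "finite P" "\<And>p. p \<in> P \<Longrightarrow> prime p" "ln (\<Prod>p\<in>P. real p) \<le> y" "0 < y"
  shows "(\<Sum>p\<in>{p\<in>P. y < real p}. ln (real p) / real p) \<le> 1"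
proof -
  have ln_nonneg: "0 \<le> ln (real p)" if "p \<in> P" for p
    using prime_ge_1_nat[OF assms(2)[OF that]] by simp
  have "(\<Sum>p\<in>{p\<in>P. y < real p}. ln (real p) / real p) \<le> (\<Sum>p\<in>{p\<in>P. y < real p}. ln (real p) / y)"
    using assms(4) ln_nonneg by (intro sum_mono divide_left_mono) auto
  also have "\<dots> \<le> (\<Sum>p\<in>P. ln (real p) / y)"
    using assms(1,4) ln_nonneg by (intro sum_mono2) auto
  also have "\<dots> = ln (\<Prod>p\<in>P. real p) / y"
    using assms(1,2) by (simp add: ln_prod sum_divide_distrib prime_gt_0_nat)
  also have "\<dots> \<le> 1"
    using assms(3,4) by simp
  finally show ?thesis .
qed

lemma sum_ln_prime_div_prime_le_of_prod:
  assumes "finite P" "\<And>p. p \<in> P \<Longrightarrow> prime p" "ln (\<Prod>p\<in>P. real p) \<le> y" "1 \<le> y"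
  shows "(\<Sum>p\<in>P. ln (real p) / real p) \<le> 2 * ln y + 1"
proof -
  have "(\<Sum>p\<in>{p\<in>P. real p \<le> y}. ln (real p) / real p)
      \<le> (\<Sum>p | prime p \<and> p \<le> nat \<lfloor>y\<rfloor>. ln (real p) / real p)"
    using assms(2)
    by (intro sum_mono2) (auto simp: real_le_iff_le_nat_floor prime_gt_0_nat dest: prime_ge_1_nat)
  also have "\<dots> \<le> 2 * ln (real (nat \<lfloor>y\<rfloor>))"
    using assms(4) by (intro sum_ln_prime_div_prime_le) (simp add: le_nat_iff)
  also have "\<dots> \<le> 2 * ln y"
    using assms(4) by (simp add: le_nat_iff of_nat_floor)
  finally have "(\<Sum>p\<in>{p\<in>P. real p \<le> y}. ln (real p) / real p) \<le> 2 * ln y" .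
  moreover have "(\<Sum>p\<in>{p\<in>P. y < real p}. ln (real p) / real p) \<le> 1"
    using assms by (intro sum_ln_prime_div_prime_gt_le) auto
  moreover have "(\<Sum>p\<in>P. ln (real p) / real p)
      = (\<Sum>p\<in>{p\<in>P. real p \<le> y}. ln (real p) / real p) + (\<Sum>p\<in>{p\<in>P. y < real p}. ln (real p) / real p)"
    using assms(1) by (rule sum_split_le_gt)
  ultimately show ?thesis
    by linarith
qed

lemma sum_inverse_primes_le_of_prod:
  assumes "finite P" "\<And>p. p \<in> P \<Longrightarrow> prime p" "ln (\<Prod>p\<in>P. real p) \<le> y" "3 \<le> y"
  shows "(\<Sum>p\<in>P. 1 / real p) \<le> 10 + 6 * ln (ln y)"
proof -
  have "(\<Sum>p\<in>{p\<in>P. real p \<le> y}. 1 / real p) \<le> (\<Sum>p | prime p \<and> p \<le> nat \<lfloor>y\<rfloor>. 1 / real p)"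
    using assms(2) by (intro sum_mono2) (auto simp: real_le_iff_le_nat_floor prime_gt_0_nat)
  also have "\<dots> \<le> 8 + 6 * ln (ln (real (nat \<lfloor>y\<rfloor>)))"
    using assms(4) by (intro sum_inverse_primes_le) (simp add: le_nat_iff)
  also have "\<dots> \<le> 8 + 6 * ln (ln y)"
    using assms(4) by (simp add: le_nat_iff of_nat_floor)
  finally have "(\<Sum>p\<in>{p\<in>P. real p \<le> y}. 1 / real p) \<le> 8 + 6 * ln (ln y)" .
  moreover have "(\<Sum>p\<in>{p\<in>P. y < real p}. 1 / real p)
      \<le> (\<Sum>p\<in>{p\<in>P. y < real p}. ln (real p) / real p) / ln 2"
    unfolding sum_divide_distrib
  proof (intro sum_mono)
    fix p assume "p \<in> {p \<in> P. y < real p}"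
    then have "2 \<le> p"
      using assms(2) prime_ge_2_nat by auto
    then have "ln 2 \<le> ln (real p)"
      by simp
    then show "1 / real p \<le> ln (real p) / real p / ln 2"
      using \<open>2 \<le> p\<close> by (simp add: field_simps)
  qed
  moreover have "(\<Sum>p\<in>{p\<in>P. y < real p}. ln (real p) / real p) / ln 2 \<le> 2"
    using sum_ln_prime_div_prime_gt_le[OF assms(1-3)] assms(4) ln2_ge_two_thirds
    by (simp add: field_simps)
  moreover have "(\<Sum>p\<in>P. 1 / real p)
      = (\<Sum>p\<in>{p\<in>P. real p \<le> y}. 1 / real p) + (\<Sum>p\<in>{p\<in>P. y < real p}. 1 / real p)"
    using assms(1) by (rule sum_split_le_gt)
  ultimately show ?thesis
    by linarith
qed

section \<open>Exceptional primes\<close>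

definition exceptional_primes :: "int set \<Rightarrow> nat set" where
  "exceptional_primes H = {p. prime p \<and> nu p H < card H}"

definition diff_prod :: "int set \<Rightarrow> nat" where
  "diff_prod H = (\<Prod>(a, b)\<in>{(a, b)\<in>H \<times> H. a \<noteq> b}. nat \<bar>a - b\<bar>)"

lemma nu_le_card: "finite H \<Longrightarrow> nu p H \<le> card H"
  unfolding nu_def by (rule card_image_le)

lemma finite_off_diagonal: "finite H \<Longrightarrow> finite {(a, b)\<in>H \<times> H. a \<noteq> b}"
  by (rule finite_subset[of _ "H \<times> H"]) auto

lemma diff_prod_pos: "0 < diff_prod H"
  unfolding diff_prod_def by (intro prod_pos) (auto simp: split_beta)

lemma exceptional_prime_dvd_diff_prod:
  assumes "finite H" "p \<in> exceptional_primes H"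
  shows "p dvd diff_prod H"
proof -
  have "nu p H < card H"
    using assms(2) unfolding exceptional_primes_def by simp
  then have "\<not> inj_on (\<lambda>x. x mod int p) H"
    unfolding nu_def by (auto dest: card_image)
  then obtain a b where ab: "a \<in> H" "b \<in> H" "a \<noteq> b" "a mod int p = b mod int p"
    unfolding inj_on_def by blast
  then have "int p dvd int (nat \<bar>a - b\<bar>)"
    by (simp add: mod_eq_dvd_iff)
  then have "p dvd nat \<bar>a - b\<bar>"
    by (simp only: int_dvd_int_iff)
  also have "nat \<bar>a - b\<bar> dvd diff_prod H"
    unfolding diff_prod_def
    using dvd_prodI[OF finite_off_diagonal[OF assms(1)], of "(a, b)" "\<lambda>(a, b). nat \<bar>a - b\<bar>"] ab
    by simp
  finally show ?thesis .
qed

lemma finite_exceptional_primes: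
  assumes "finite H"
  shows "finite (exceptional_primes H)"
proof (rule finite_subset)
  show "exceptional_primes H \<subseteq> {..diff_prod H}"
    using assms exceptional_prime_dvd_diff_prod diff_prod_pos by (auto intro: dvd_imp_le)
qed simp

lemma prod_exceptional_primes_le_diff_prod:
  assumes "finite H"
  shows "\<Prod>(exceptional_primes H) \<le> diff_prod H"
proof (rule dvd_imp_le)
  show "\<Prod>(exceptional_primes H) dvd diff_prod H"
    using assms diff_prod_pos exceptional_prime_dvd_diff_prod
    by (intro prod_primes_dvd) (auto simp: exceptional_primes_def)
qed (rule diff_prod_pos)

lemma diff_prod_le:
  assumes "finite H" "\<forall>x\<in>H. \<bar>real_of_int x\<bar> \<le> h" "1 \<le> 2 * h"
  shows "real (diff_prod H) \<le> (2 * h) ^ (card H)\<^sup>2"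
proof -
  let ?Off = "{(a, b)\<in>H \<times> H. a \<noteq> b}"
  have "real (diff_prod H) = (\<Prod>(a, b)\<in>?Off. real (nat \<bar>a - b\<bar>))"
    unfolding diff_prod_def of_nat_prod by (simp add: case_prod_beta)
  also have "\<dots> \<le> (\<Prod>(a, b)\<in>?Off. 2 * h)"
  proof (intro prod_mono, clarify)
    fix a b assume "a \<in> H" "b \<in> H"
    then have "\<bar>real_of_int a\<bar> \<le> h" "\<bar>real_of_int b\<bar> \<le> h"
      using assms(2) by auto
    then show "0 \<le> real (nat \<bar>a - b\<bar>) \<and> real (nat \<bar>a - b\<bar>) \<le> 2 * h"
      by simp
  qed
  also have "\<dots> = (2 * h) ^ card ?Off"
    by (simp add: case_prod_beta)
  also have "\<dots> \<le> (2 * h) ^ (card H)\<^sup>2"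
  proof (intro power_increasing)
    have "card ?Off \<le> card (H \<times> H)"
      using assms(1) by (intro card_mono) auto
    then show "card ?Off \<le> (card H)\<^sup>2"
      by (simp add: card_cartesian_product power2_eq_square)
  qed (use assms(3) in simp)
  finally show ?thesis .
qed

lemma ln_prod_exceptional_primes_le:
  assumes "finite H" "\<forall>x\<in>H. \<bar>real_of_int x\<bar> \<le> h" "1 \<le> 2 * h"
  shows "ln (\<Prod>p\<in>exceptional_primes H. real p) \<le> (real (card H))\<^sup>2 * ln (2 * h)"
proof -
  have "(\<Prod>p\<in>exceptional_primes H. real p) \<le> real (diff_prod H)"
    using prod_exceptional_primes_le_diff_prod[OF assms(1)] by (simp flip: of_nat_prod)
  also have "\<dots> \<le> (2 * h) ^ (card H)\<^sup>2"
    using assms by (rule diff_prod_le)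
  moreover have "0 < (\<Prod>p\<in>exceptional_primes H. real p)"
    by (intro prod_pos) (auto simp: exceptional_primes_def prime_gt_0_nat)
  ultimately have "ln (\<Prod>p\<in>exceptional_primes H. real p) \<le> ln ((2 * h) ^ (card H)\<^sup>2)"
    by (intro ln_mono) auto
  also have "\<dots> = (real (card H))\<^sup>2 * ln (2 * h)"
    using assms(3) by (subst ln_realpow) auto
  finally show ?thesis .
qed

lemma one_le_bound_if_two_le_card:
  assumes "2 \<le> card H" "\<forall>x\<in>H. \<bar>real_of_int x\<bar> \<le> h"
  shows "1 \<le> h"
proof -
  have "\<not> H \<subseteq> {0}"
    using assms(1) card_mono[of "{0}" H] by auto
  then obtain x where "x \<in> H" "x \<noteq> 0"
    by blast
  then have "1 \<le> \<bar>real_of_int x\<bar>" "\<bar>real_of_int x\<bar> \<le> h"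
    using assms(2) by auto
  then show ?thesis
    by linarith
qed

lemma two_mem_exceptional_primes:
  assumes "admissible H" "2 \<le> card H"
  shows "2 \<in> exceptional_primes H"
proof -
  have "nu 2 H < 2"
    using assms(1) unfolding admissible_def by simp
  then show ?thesis
    using assms(2) unfolding exceptional_primes_def by simp
qed

lemma beta_eq_sum_exceptional_primes:
  assumes "finite H"
  shows "beta H = (\<Sum>p\<in>exceptional_primes H. (real (card H) - real (nu p H)) * ln (real p) / real p)"
proof -
  have "beta H = (\<Sum>\<^sub>\<infinity>p\<in>exceptional_primes H. (real (card H) - real (nu p H)) * ln (real p) / real p)"
    unfolding beta_def using nu_le_card[OF assms]
    by (intro infsum_cong_neutral) (auto simp: exceptional_primes_def not_less intro: antisym)
  then show ?thesis
    using finite_exceptional_primes[OF assms] by simp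
qed

lemma beta_ge:
  assumes "finite H" "admissible H" "2 \<le> card H"
  shows "ln 2 / 2 \<le> beta H"
proof -
  define f where "f p = (real (card H) - real (nu p H)) * ln (real p) / real p" for p
  have "nu 2 H < 2"
    using assms(2) unfolding admissible_def by simp
  then have "ln 2 / 2 \<le> f 2"
    using assms(3) unfolding f_def by (simp add: divide_right_mono mult_le_cancel_right1)
  also have "\<dots> \<le> (\<Sum>p\<in>exceptional_primes H. f p)"
  proof (rule member_le_sum)
    fix p assume "p \<in> exceptional_primes H - {2}"
    then show "0 \<le> f p"
      using nu_le_card[OF assms(1)] prime_ge_1_nat[of p]
      unfolding f_def exceptional_primes_def by simp
  qed (use assms two_mem_exceptional_primes finite_exceptional_primes in auto)
  also have "\<dots> = beta H"
    unfolding f_def by (rule beta_eq_sum_exceptional_primes[OF assms(1), symmetric])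
  finally show ?thesis .
qed

lemma beta_le:
  assumes "finite H"
  shows "beta H \<le> card H * (\<Sum>p\<in>exceptional_primes H. ln (real p) / real p)"
  unfolding beta_eq_sum_exceptional_primes[OF assms] sum_distrib_left
proof (intro sum_mono)
  fix p assume "p \<in> exceptional_primes H"
  then have "0 \<le> ln (real p) / real p"
    using prime_ge_1_nat[of p] unfolding exceptional_primes_def by simp
  then show "(real (card H) - real (nu p H)) * ln (real p) / real p \<le> real (card H) * (ln (real p) / real p)"
    by (simp add: mult_right_mono flip: times_divide_eq_right)
qed

section \<open>The singular series\<close>

lemma power_one_minus_le:
  fixes x :: real
  assumes "0 \<le> x" "x \<le> 1"
  shows "(1 - x) ^ k \<le> 1 - real k * x + (real k)\<^sup>2 * x\<^sup>2"
proof (induction k)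
  case 0
  then show ?case
    by simp
next
  case (Suc k)
  have "(1 - x) ^ Suc k \<le> (1 - x) * (1 - real k * x + (real k)\<^sup>2 * x\<^sup>2)"
    using Suc assms by (simp add: mult_left_mono)
  also have "\<dots> = 1 - real (Suc k) * x + (real k + (real k)\<^sup>2) * x\<^sup>2 - (real k)\<^sup>2 * x ^ 3"
    by (simp add: algebra_simps power2_eq_square power3_eq_cube)
  also have "\<dots> \<le> 1 - real (Suc k) * x + (real (Suc k))\<^sup>2 * x\<^sup>2"
    using assms by (simp add: power2_eq_square algebra_simps mult_right_mono)
  finally show ?case .
qed

lemma abs_bernoulli_quotient_minus_1_le:
  fixes x :: real
  assumes "0 \<le> x" "k * x \<le> 1 / 2"
  shows "\<bar>(1 - k * x) / (1 - x) ^ k - 1\<bar> \<le> 2 * (real k)\<^sup>2 * x\<^sup>2"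
proof (cases "k = 0")
  case False
  then have "1 * x \<le> real k * x"
    using assms(1) by (intro mult_right_mono) auto
  then have "x \<le> 1"
    using assms(2) by simp
  define P where "P = (1 - x) ^ k"
  have lower: "1 - k * x \<le> P"
    using Bernoulli_inequality[of "- x" k] \<open>x \<le> 1\<close> unfolding P_def by simp
  have upper: "P \<le> 1 - k * x + (real k)\<^sup>2 * x\<^sup>2"
    using power_one_minus_le[OF assms(1) \<open>x \<le> 1\<close>] unfolding P_def .
  have half: "1 / 2 \<le> P"
    using lower assms(2) by linarith
  have "\<bar>(1 - k * x) / P - 1\<bar> = (P - (1 - k * x)) / P"
    using lower half by (simp add: abs_if field_simps)
  also have "\<dots> \<le> (real k)\<^sup>2 * x\<^sup>2 / (1 / 2)"
    using lower upper half by (intro frac_le) auto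
  finally show ?thesis
    unfolding P_def by simp
qed simp

definition sing_factor :: "int set \<Rightarrow> nat \<Rightarrow> real" where
  "sing_factor H n = (if prime n
      then (1 - real (nu n H) / real n) * (1 - 1 / real n) powi (- int (card H))
      else 1)"

lemma sing_series_eq_prodinf: "sing_series H = prodinf (sing_factor H)"
  unfolding sing_series_def sing_factor_def ..

lemma sing_factor_prime:
  "prime p \<Longrightarrow> sing_factor H p = (1 - nu p H / p) / (1 - 1 / p) ^ card H"
  unfolding sing_factor_def by (simp add: power_int_minus power_int_of_nat divide_inverse)

lemma sing_factor_pos:
  assumes "admissible H"
  shows "0 < sing_factor H n"
proof (cases "prime n")
  case True
  then have "nu n H < n" "2 \<le> n"
    using assms prime_ge_2_nat unfolding admissible_def by auto
  then show ?thesis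
    using True by (simp add: sing_factor_prime field_simps)
qed (simp add: sing_factor_def)

lemma sing_factor_le_1:
  assumes "finite H" "n \<notin> exceptional_primes H"
  shows "sing_factor H n \<le> 1"
proof (cases "prime n")
  case True
  then have "nu n H = card H" "2 \<le> n"
    using assms nu_le_card[OF assms(1), of n] prime_ge_2_nat
    unfolding exceptional_primes_def by auto
  moreover have "1 - card H / n \<le> (1 - 1 / n) ^ card H"
    using Bernoulli_inequality[of "- 1 / n" "card H"] \<open>2 \<le> n\<close> by simp
  ultimately show ?thesis
    using True by (simp add: sing_factor_prime)
qed (simp add: sing_factor_def)

lemma sing_factor_le_exp:
  assumes "prime p"
  shows "sing_factor H p \<le> exp (2 * card H / p)"
proof -
  have p: "2 \<le> real p"
    using prime_ge_2_nat[OF assms] by simp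
  have "1 / (1 - 1 / p) = 1 + 1 / (p - 1)"
    using p by (simp add: field_simps)
  also have "\<dots> \<le> exp (1 / (p - 1))"
    by (rule exp_ge_add_one_self)
  also have "\<dots> \<le> exp (2 / p)"
    using p by (simp add: field_simps)
  finally have "(1 / (1 - 1 / p)) ^ card H \<le> exp (2 / p) ^ card H"
    using p by (intro power_mono) (simp_all add: field_simps)
  then have "1 / (1 - 1 / p) ^ card H \<le> exp (2 * card H / p)"
    by (simp add: power_one_over mult.commute flip: exp_of_nat_mult)
  moreover have "sing_factor H p \<le> 1 / (1 - 1 / p) ^ card H"
    using assms p by (simp add: sing_factor_prime divide_right_mono)
  ultimately show ?thesis
    by linarith
qed

lemma convergent_prod_sing_factor:
  assumes "finite H" "admissible H"
  shows "convergent_prod (sing_factor H)"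
proof -
  define k where "k = card H"
  obtain N where N: "\<And>p. p \<in> exceptional_primes H \<Longrightarrow> p < N"
    using finite_exceptional_primes[OF assms(1)] by (auto simp: finite_nat_set_iff_bounded)
  \<comment> \<open>beyond the exceptional primes \<open>nu_p = k\<close>, so the factor is \<open>(1 - k/p) (1 - 1/p)^-k = 1 + O(k^2/p^2)\<close>\<close>
  have bound: "\<bar>sing_factor H n - 1\<bar> \<le> 2 * (real k)\<^sup>2 * inverse (real n ^ 2)"
    if n: "N + 2 * k + 2 \<le> n" for n
  proof (cases "prime n")
    case True
    have "n \<notin> exceptional_primes H"
      using N[of n] n by linarith
    then have "nu n H = k"
      using True nu_le_card[OF assms(1), of n] unfolding exceptional_primes_def k_def by simp
    then have "sing_factor H n = (1 - k * (1 / n)) / (1 - 1 / n) ^ k"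
      using True by (simp add: sing_factor_prime k_def)
    moreover have "k * (1 / n) \<le> 1 / 2"
      using n by (simp add: field_simps)
    ultimately have "\<bar>sing_factor H n - 1\<bar> \<le> 2 * (real k)\<^sup>2 * (1 / n)\<^sup>2"
      using abs_bernoulli_quotient_minus_1_le[of "1 / n" k] by simp
    then show ?thesis
      by (simp add: power_inverse divide_inverse)
  qed (simp add: sing_factor_def)
  have "summable (\<lambda>n. 2 * (real k)\<^sup>2 * inverse (real n ^ 2))"
    by (intro summable_mult inverse_power_summable) simp
  then have "summable (\<lambda>n. \<bar>sing_factor H n - 1\<bar>)"
    by (rule summable_comparison_test'[where N = "N + 2 * k + 2"]) (use bound in simp)
  moreover have "sing_factor H n - 1 \<noteq> - 1" for n
    using sing_factor_pos[OF assms(2), of n] by linarith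
  ultimately have "convergent_prod (\<lambda>n. 1 + (sing_factor H n - 1))"
    by (rule summable_imp_convergent_prod_real)
  then show ?thesis
    by simp
qed

lemma prodinf_le_prod:
  fixes g :: "nat \<Rightarrow> real"
  assumes "convergent_prod g" "finite A" "\<And>n. 0 \<le> g n" "\<And>n. n \<notin> A \<Longrightarrow> g n \<le> 1"
  shows "prodinf g \<le> prod g A"
proof (rule LIMSEQ_le_const2[OF convergent_prod_LIMSEQ[OF assms(1)]])
  obtain N where N: "A \<subseteq> {..N}"
    using assms(2) finite_nat_iff_bounded_le by auto
  have "(\<Prod>i\<le>n. g i) \<le> prod g A" if "N \<le> n" for n
  proof -
    have "A \<subseteq> {..n}"
      using N that by auto
    then have "(\<Prod>i\<le>n. g i) = prod g A * prod g ({..n} - A)"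
      by (metis finite_atMost prod.subset_diff mult.commute)
    also have "\<dots> \<le> prod g A * 1"
      using assms(3,4) by (intro mult_left_mono prod_le_1 prod_nonneg) auto
    finally show ?thesis
      by simp
  qed
  then show "\<exists>N. \<forall>n\<ge>N. (\<Prod>i\<le>n. g i) \<le> prod g A"
    by blast
qed

lemma sing_series_le:
  assumes "finite H" "admissible H"
  shows "sing_series H \<le> exp (2 * real (card H) * (\<Sum>p\<in>exceptional_primes H. 1 / p))"
proof -
  have "sing_series H \<le> (\<Prod>p\<in>exceptional_primes H. sing_factor H p)"
    unfolding sing_series_eq_prodinf
    using assms convergent_prod_sing_factor sing_factor_pos sing_factor_le_1 finite_exceptional_primes
    by (intro prodinf_le_prod) (auto intro: less_imp_le)
  also have "\<dots> \<le> (\<Prod>p\<in>exceptional_primes H. exp (2 * card H / p))"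
    using assms(2) sing_factor_pos sing_factor_le_exp
    by (intro prod_mono) (auto simp: exceptional_primes_def less_imp_le)
  also have "\<dots> = exp (2 * real (card H) * (\<Sum>p\<in>exceptional_primes H. 1 / p))"
    using finite_exceptional_primes[OF assms(1)] by (simp add: exp_sum sum_distrib_left)
  finally show ?thesis .
qed

section \<open>Bounds in terms of log log h\<close>

lemma two_le_ln_10_mult:
  fixes h :: real
  assumes "1 \<le> h"
  shows "2 \<le> ln (10 * h)"
proof -
  have "exp 2 = exp 1 * (exp 1 :: real)"
    by (simp flip: exp_add)
  also have "\<dots> \<le> 3 * 3"
    using exp_le by (intro mult_mono) auto
  also have "\<dots> \<le> 10 * h"
    using assms by simp
  finally show ?thesis
    using assms by (subst ln_ge_iff) auto
qed

lemma ln_square_mult_le: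
  fixes k L :: real
  assumes "1 \<le> k" "2 \<le> L"
  shows "ln (k\<^sup>2 * L) \<le> (4 * ln k + 1) * ln L"
proof -
  have "1 \<le> 2 * ln L"
    using ln2_ge_two_thirds ln_mono[OF assms(2)] by simp
  then have "2 * ln k \<le> 4 * ln k * ln L"
    using assms(1) mult_left_mono[of 1 "2 * ln L" "2 * ln k"] by simp
  then show ?thesis
    using assms by (simp add: ln_mult ln_realpow algebra_simps)
qed

lemma exceptional_primes_sums_le:
  assumes "finite H" "2 \<le> card H" "\<forall>x\<in>H. \<bar>real_of_int x\<bar> \<le> h"
  defines "K \<equiv> 4 * ln (real (card H)) + 1" and "l \<equiv> ln (ln (10 * h))"
  shows "(\<Sum>p\<in>exceptional_primes H. ln (real p) / real p) \<le> (2 * K + 2) * l"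
    and "(\<Sum>p\<in>exceptional_primes H. 1 / real p) \<le> 10 + 6 * ln (K * l)"
proof -
  define y where "y = (real (card H))\<^sup>2 * ln (10 * h)"
  have h: "1 \<le> h"
    using assms(2,3) by (rule one_le_bound_if_two_le_card)
  have L: "2 \<le> ln (10 * h)"
    using h by (rule two_le_ln_10_mult)
  have "1 \<le> 2 * l"
    unfolding l_def using ln2_ge_two_thirds ln_mono[OF L] by simp
  have "2\<^sup>2 \<le> (real (card H))\<^sup>2"
    using assms(2) by (intro power_mono) auto
  then have "4 * 2 \<le> y"
    unfolding y_def using L by (intro mult_mono) auto
  have ln_y: "ln y \<le> K * l"
    unfolding y_def K_def l_def using assms(2) L by (intro ln_square_mult_le) auto
  have "ln (\<Prod>p\<in>exceptional_primes H. real p) \<le> (real (card H))\<^sup>2 * ln (2 * h)"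
    using assms(1,3) h by (intro ln_prod_exceptional_primes_le) auto
  also have "\<dots> \<le> y"
    unfolding y_def using h by (intro mult_left_mono) auto
  finally have prod_le: "ln (\<Prod>p\<in>exceptional_primes H. real p) \<le> y" .
  have "(\<Sum>p\<in>exceptional_primes H. ln (real p) / real p) \<le> 2 * ln y + 1"
    using prod_le \<open>4 * 2 \<le> y\<close> finite_exceptional_primes[OF assms(1)]
    by (intro sum_ln_prime_div_prime_le_of_prod) (auto simp: exceptional_primes_def)
  then show "(\<Sum>p\<in>exceptional_primes H. ln (real p) / real p) \<le> (2 * K + 2) * l"
    using ln_y \<open>1 \<le> 2 * l\<close> by (simp add: algebra_simps)
  have "(\<Sum>p\<in>exceptional_primes H. 1 / real p) \<le> 10 + 6 * ln (ln y)"
    using prod_le \<open>4 * 2 \<le> y\<close> finite_exceptional_primes[OF assms(1)]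
    by (intro sum_inverse_primes_le_of_prod) (auto simp: exceptional_primes_def)
  moreover have "ln (ln y) \<le> ln (K * l)"
    using ln_y \<open>4 * 2 \<le> y\<close> by (intro ln_mono) auto
  ultimately show "(\<Sum>p\<in>exceptional_primes H. 1 / real p) \<le> 10 + 6 * ln (K * l)"
    by linarith
qed

lemma beta_le_ln_ln:
  assumes "finite H" "2 \<le> card H" "\<forall>x\<in>H. \<bar>real_of_int x\<bar> \<le> h"
  shows "beta H \<le> real (card H) * (8 * ln (real (card H)) + 4) * ln (ln (10 * h))"
proof -
  have "beta H \<le> card H * (\<Sum>p\<in>exceptional_primes H. ln (real p) / real p)"
    using assms(1) by (rule beta_le)
  also have "\<dots> \<le> card H * ((2 * (4 * ln (card H) + 1) + 2) * ln (ln (10 * h)))"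
    using exceptional_primes_sums_le(1)[OF assms] by (intro mult_left_mono) auto
  finally show ?thesis
    by (simp add: algebra_simps)
qed

lemma sing_series_le_ln_ln:
  assumes "finite H" "admissible H" "2 \<le> card H" "\<forall>x\<in>H. \<bar>real_of_int x\<bar> \<le> h"
  shows "sing_series H \<le> exp (20 * real (card H)) * (4 * ln (real (card H)) + 1) powr (12 * real (card H))
      * ln (ln (10 * h)) powr (12 * real (card H))"
proof -
  define k where "k = real (card H)"
  define K where "K = 4 * ln k + 1"
  define l where "l = ln (ln (10 * h))"
  have "2 \<le> k"
    using assms(3) unfolding k_def by simp
  have "2 \<le> ln (10 * h)"
    using assms(3,4) by (intro two_le_ln_10_mult one_le_bound_if_two_le_card)
  then have "0 < l"
    unfolding l_def by simp
  have "0 \<le> ln k"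
    using \<open>2 \<le> k\<close> by (intro ln_ge_zero) simp
  then have "0 < K"
    unfolding K_def by simp
  have "sing_series H \<le> exp (2 * k * (\<Sum>p\<in>exceptional_primes H. 1 / real p))"
    unfolding k_def using assms(1,2) by (rule sing_series_le)
  also have "\<dots> \<le> exp (2 * k * (10 + 6 * ln (K * l)))"
    using exceptional_primes_sums_le(2)[OF assms(1,3,4)] \<open>2 \<le> k\<close>
    unfolding k_def K_def l_def by (intro exp_mono mult_left_mono) auto
  also have "\<dots> = exp (20 * k) * (K * l) powr (12 * k)"
    using \<open>0 < K\<close> \<open>0 < l\<close> by (simp add: powr_def algebra_simps flip: exp_add)
  also have "\<dots> = exp (20 * k) * K powr (12 * k) * l powr (12 * k)"
    using \<open>0 < K\<close> \<open>0 < l\<close> by (simp add: powr_mult)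
  finally show ?thesis
    unfolding k_def K_def l_def .
qed

theorem lemma6:
  fixes k :: nat
  assumes "k \<ge> 2"
  shows "\<exists>c::real > 0. \<exists>C::real. \<exists>b::real. \<forall>(H::int set) (h::real).
           finite H \<and> card H = k \<and> admissible H \<and> (\<forall>x\<in>H. \<bar>real_of_int x\<bar> \<le> h) \<longrightarrow>
             c \<le> beta H \<and> beta H \<le> C * ln (ln (10 * h)) \<and>
             sing_series H \<le> C * ln (ln (10 * h)) powr b"
proof -
  define C where "C = max (k * (8 * ln k + 4)) (exp (20 * real k) * (4 * ln k + 1) powr (12 * real k))"
  have "ln 2 / 2 \<le> beta H \<and> beta H \<le> C * ln (ln (10 * h))
      \<and> sing_series H \<le> C * ln (ln (10 * h)) powr (12 * real k)"
    if H: "finite H" "card H = k" "admissible H" "\<forall>x\<in>H. \<bar>real_of_int x\<bar> \<le> h" for H h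
  proof -
    have "1 \<le> h"
      using H assms by (intro one_le_bound_if_two_le_card) auto
    then have "0 \<le> ln (ln (10 * h))"
      using two_le_ln_10_mult[of h] by simp
    then have "k * (8 * ln k + 4) * ln (ln (10 * h)) \<le> C * ln (ln (10 * h))"
      and "exp (20 * real k) * (4 * ln k + 1) powr (12 * real k) * ln (ln (10 * h)) powr (12 * real k)
        \<le> C * ln (ln (10 * h)) powr (12 * real k)"
      unfolding C_def by (intro mult_right_mono; simp)+
    then show ?thesis
      using beta_ge[of H] beta_le_ln_ln[of H h] sing_series_le_ln_ln[of H h] H assms by auto
  qed
  then show ?thesis
    by (intro exI[of _ "ln 2 / 2"] exI[of _ C] exI[of _ "12 * real k"] conjI allI impI) auto
qed

end
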